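(* Let $\xi>2$ and define $$\varepsilon_{min}(\xi)=\begin{cases}\infty,&\xi\le3,\\ \sqrt{(1-\tfrac2\xi)(1+\tfrac{1}{\xi-3})},&3<\xi<4,\\ 1,&\xi\ge4,\end{cases}\qquad \lambda_{max}(\varepsilon,\xi)=\xi\sqrt{\frac{\varepsilon^2}{1-\frac2\xi}-1}.$$ Then the set of pairs $(\varepsilon,\lambda)$ with $\varepsilon>1$ belonging to case (II) at position $\xi$ is exactly the set of pairs with $\varepsilon>\varepsilon_{min}(\xi)$ and $\lambda_c(\varepsilon)<\lambda<\lambda_{max}(\varepsilon,\xi)$.
   Context: Dimensionless potential: $U_\lambda(\xi)=(1-\tfrac2\xi)(1+\tfrac{\lambda^2}{\xi^2})$. For $\lambda^2>12$, $U_\lambda$ on $(2,\infty)$ has a local maximum at $\xi_{max}(\lambda)=\tfrac{\lambda^2}{2}(1-\sqrt{1-12/\lambda^2})$. For $\varepsilon>1$, $\lambda_c(\varepsilon)$ is the value of $\lambda$ for which the maximum of $U_\lambda$ equals $\varepsilon^2$; explicitly $\lambda_c(\varepsilon)^2=12/(1-4\alpha-8\alpha^2+8\alpha\sqrt{\alpha^2+\alpha})$, $\alpha=\tfrac98\varepsilon^2-1$ (so $\lambda_c(\varepsilon)>4$ for $\varepsilon>1$). A pair $(\varepsilon,\lambda)$ with $\varepsilon>1$ belongs to case (II) (scattered particles incoming from infinity) at position $\xi$ if $\lambda>\lambda_c(\varepsilon)$, $\xi>\xi_{max}(\lambda)$ and $U_\lambda(\xi)<\varepsilon^2$. *)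

theory Defs
  imports Complex_Main "HOL-Library.Extended_Real"
begin

definition U :: "real \<Rightarrow> real \<Rightarrow> real" where
  "U lam xi = (1 - 2 / xi) * (1 + lam^2 / xi^2)"

definition xi_max :: "real \<Rightarrow> real" where
  "xi_max lam = lam^2 / 2 * (1 - sqrt (1 - 12 / lam^2))"

definition alpha :: "real \<Rightarrow> real" where
  "alpha eps = 9/8 * eps^2 - 1"

definition lambda_c :: "real \<Rightarrow> real" where
  "lambda_c eps = sqrt (12 / (1 - 4 * alpha eps - 8 * (alpha eps)^2
                          + 8 * alpha eps * sqrt ((alpha eps)^2 + alpha eps)))"

definition case_II :: "real \<Rightarrow> real \<Rightarrow> real \<Rightarrow> bool" where
  "case_II eps lam xi \<longleftrightarrow> eps > 1 \<and> lam > lambda_c eps \<and> xi > xi_max lam \<and> U lam xi < eps^2"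

definition eps_min :: "real \<Rightarrow> ereal" where
  "eps_min xi = (if xi \<le> 3 then \<infinity>
                 else if xi < 4 then ereal (sqrt ((1 - 2/xi) * (1 + 1/(xi - 3))))
                 else 1)"

definition lambda_max :: "real \<Rightarrow> real \<Rightarrow> real" where
  "lambda_max eps xi = xi * sqrt (eps^2 / (1 - 2/xi) - 1)"

end

theory Submission
  imports Defs
begin

text \<open>
  With \<open>s = sqrt (1 - 12/\<lambda>\<^sup>2)\<close> the maximum sits at \<open>\<xi>\<^sub>max = 6/(1+s) \<in> (3, 6]\<close> and has height
  \<open>2(2-s)\<^sup>2/(9(1-s))\<close>, which is increasing in \<open>s\<close>, so \<open>\<lambda> > \<lambda>\<^sub>c(\<epsilon>)\<close> makes the barrier higher than
  \<open>\<epsilon>\<^sup>2\<close>. For \<open>3 < \<xi> \<le> 6\<close> the condition \<open>\<xi> > \<xi>\<^sub>max(\<lambda>)\<close> reads \<open>\<lambda>\<^sup>2 < \<mu>\<^sup>2 = \<xi>\<^sup>2/(\<xi>-3)\<close>, where \<open>\<mu>\<close> is the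
  angular momentum whose maximum lies exactly at \<open>\<xi>\<close>, with height \<open>\<epsilon>\<^sub>min(\<xi>)\<^sup>2\<close>. Below \<open>\<mu>\<close>,
  \<open>U\<^sub>\<lambda>(\<xi>) < \<epsilon>\<^sup>2\<close> forces \<open>\<epsilon> > \<epsilon>\<^sub>min(\<xi>)\<close>; conversely, if \<open>\<lambda> \<ge> \<mu>\<close> then \<open>\<mu> > \<lambda>\<^sub>c(\<epsilon>)\<close>, so the barrier of
  \<open>\<mu>\<close>, namely \<open>\<epsilon>\<^sub>min(\<xi>)\<^sup>2\<close>, exceeds \<open>\<epsilon>\<^sup>2\<close>. Finally \<open>U\<^sub>\<lambda>(\<xi>) < \<epsilon>\<^sup>2\<close> is just \<open>\<lambda> < \<lambda>\<^sub>max(\<epsilon>, \<xi>)\<close>.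
\<close>

lemma sqrt_one_minus_12_div:
  fixes lam :: real
  assumes "lam^2 > 12"
  defines "s \<equiv> sqrt (1 - 12/lam^2)"
  shows "0 \<le> s" "s < 1" "lam^2 * (1 - s^2) = 12"
proof -
  have lam2: "lam^2 > 0" using assms(1) by linarith
  have "0 \<le> 1 - 12/lam^2" using assms(1) by (simp add: divide_le_eq)
  then have s2: "s^2 = 1 - 12/lam^2" unfolding s_def by simp
  show s0: "0 \<le> s" unfolding s_def using \<open>0 \<le> 1 - 12/lam^2\<close> by simp
  have "s^2 < 1^2" using s2 lam2 by simp
  then show "s < 1" using power_less_imp_less_base s0 by fastforce
  show "lam^2 * (1 - s^2) = 12" using s2 lam2 by simp
qed

lemma xi_max_eq:
  fixes lam :: real
  assumes "lam^2 > 12"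
  shows "xi_max lam = 6 / (1 + sqrt (1 - 12/lam^2))"
proof -
  define s where "s = sqrt (1 - 12/lam^2)"
  note S = sqrt_one_minus_12_div[OF assms, folded s_def]
  have "lam^2/2 * (1-s) = lam^2 * (1 - s^2) / (2 * (1+s))"
    using S(1) by (simp add: field_simps power2_eq_square)
  also have "\<dots> = 12 / (2 * (1+s))" using S(3) by simp
  also have "\<dots> = 6/(1+s)" using S(1) by (simp add: field_simps)
  finally show ?thesis unfolding xi_max_def s_def .
qed

lemma xi_max_bounds:
  fixes lam :: real
  assumes "lam^2 > 12"
  shows "3 < xi_max lam" "xi_max lam \<le> 6"
proof -
  define s where "s = sqrt (1 - 12/lam^2)"
  have "0 \<le> s" "s < 1" using sqrt_one_minus_12_div[OF assms] unfolding s_def by simp_all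
  then show "3 < xi_max lam" "xi_max lam \<le> 6"
    unfolding xi_max_eq[OF assms, folded s_def] by (simp_all add: field_simps)
qed

lemma less_xi_max_iff:
  fixes lam xi :: real
  assumes "lam^2 > 12" and "0 < xi" and "xi \<le> 6"
  shows "xi_max lam < xi \<longleftrightarrow> xi^2 < lam^2 * (xi - 3)"
proof -
  define s where "s = sqrt (1 - 12/lam^2)"
  note S = sqrt_one_minus_12_div[OF assms(1), folded s_def]
  have "xi_max lam < xi \<longleftrightarrow> 6 - xi < xi * s"
    unfolding xi_max_eq[OF assms(1), folded s_def] using S(1)
    by (simp add: divide_less_eq algebra_simps)
  also have "\<dots> \<longleftrightarrow> (6 - xi)^2 < (xi * s)^2"
    using assms(2,3) S(1) by (intro iffI power_strict_mono) (auto intro: power_less_imp_less_base)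
  also have "\<dots> \<longleftrightarrow> lam^2 * (6 - xi)^2 < lam^2 * (xi * s)^2"
    using assms(1) by (intro mult_less_cancel_left_pos[symmetric]) linarith
  also have "lam^2 * (xi * s)^2 = xi^2 * (lam^2 * s^2)" by (simp add: power_mult_distrib)
  also have "lam^2 * s^2 = lam^2 - 12" using S(3) by (simp add: algebra_simps)
  also have "lam^2 * (6 - xi)^2 < xi^2 * (lam^2 - 12) \<longleftrightarrow> 12 * xi^2 < 12 * (lam^2 * (xi - 3))"
    by (simp add: power2_eq_square algebra_simps)
  finally show ?thesis by simp
qed

lemma U_xi_max:
  fixes lam :: real
  assumes "lam^2 > 12"
  defines "s \<equiv> sqrt (1 - 12/lam^2)"
  shows "U lam (xi_max lam) = 2 * (2 - s)^2 / (9 * (1 - s))"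
proof -
  note S = sqrt_one_minus_12_div[OF assms(1), folded s_def]
  have nz: "1 - s \<noteq> 0" "1 + s \<noteq> 0" using S(1,2) by auto
  have "(1 - s) * (1 + s) = 1 - s^2" by (simp add: power2_eq_square algebra_simps)
  then have lam2: "lam^2 = 12 / ((1 - s) * (1 + s))"
    using S(3) nz by (metis eq_divide_eq mult_eq_0_iff)
  have "1 - 2 / (6 / (1 + s)) = (2 - s) / 3" by (simp add: field_simps)
  moreover have "lam^2 / (6 / (1 + s))^2 = (1 + s) / (3 * (1 - s))"
    unfolding lam2 using nz by (simp add: divide_simps power2_eq_square) (simp add: algebra_simps)
  ultimately have "U lam (xi_max lam) = (2 - s) / 3 * (1 + (1 + s) / (3 * (1 - s)))"
    unfolding U_def xi_max_eq[OF assms(1), folded s_def] by simp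
  also have "\<dots> = 2 * (2 - s)^2 / (9 * (1 - s))"
    using nz by (simp add: field_simps power2_eq_square)
  finally show ?thesis .
qed

text \<open>\<open>\<lambda>\<^sub>c(\<epsilon>)\<^sup>2 = 12/(u(2-u))\<close> where \<open>u = 1 - s\<close> is the smaller root of \<open>2(1+u)\<^sup>2 = 9\<epsilon>\<^sup>2u\<close>,
  i.e. of \<open>u\<^sup>2 - (4\<alpha>+2)u + 1 = 0\<close>.\<close>

lemma lambda_c_root:
  fixes eps :: real
  assumes "eps > 1"
  obtains u where "0 < u" "u < 1" "lambda_c eps = sqrt (12 / (u * (2 - u)))"
    "\<And>v. 0 < v \<Longrightarrow> v < u \<Longrightarrow> 9 * eps^2 * v < 2 * (1 + v)^2"
proof -
  define a where "a = alpha eps"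
  define r where "r = sqrt (a^2 + a)"
  have a8: "a > 1/8" unfolding a_def alpha_def using assms by (simp add: one_less_power)
  then have r2: "r^2 = a^2 + a" and r0: "r \<ge> 0" unfolding r_def by simp_all
  have "a^2 < r^2" using r2 a8 by simp
  then have ar: "a < r" using r0 by (rule power_less_imp_less_base)
  have "r^2 < (a + 1/2)^2" using r2 by (simp add: power2_eq_square algebra_simps)
  then have ra: "r < a + 1/2" by (rule power_less_imp_less_base) (use a8 in simp)
  define u where "u = 2*a + 1 - 2*r"
  show thesis
  proof
    show "0 < u" "u < 1" unfolding u_def using ar ra by simp_all
    show "lambda_c eps = sqrt (12 / (u * (2 - u)))"
      unfolding lambda_c_def a_def[symmetric] r_def[symmetric] u_def using r2
      by (simp add: power2_eq_square algebra_simps)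
  next
    fix v :: real
    assume "0 < v" "v < u"
    have "u < 2*a + 1 + 2*r" unfolding u_def using ar a8 by simp
    then have "0 < (v - u) * (v - (2*a + 1 + 2*r))"
      using \<open>v < u\<close> by (simp add: mult_neg_neg)
    also have "\<dots> = v^2 - (4*a + 2) * v + 1"
      unfolding u_def using r2 by (simp add: power2_eq_square algebra_simps)
    finally show "9 * eps^2 * v < 2 * (1 + v)^2"
      unfolding a_def alpha_def by (simp add: power2_eq_square algebra_simps)
  qed
qed

lemma lambda_c_less_imp:
  fixes eps lam :: real
  assumes "eps > 1" and "lambda_c eps < lam"
  shows "lam > 0" "lam^2 > 12" "eps^2 < U lam (xi_max lam)"
proof -
  obtain u where u: "0 < u" "u < 1" "lambda_c eps = sqrt (12 / (u * (2 - u)))"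
    and below: "\<And>v. 0 < v \<Longrightarrow> v < u \<Longrightarrow> 9 * eps^2 * v < 2 * (1 + v)^2"
    using lambda_c_root[OF assms(1)] by blast
  define D where "D = u * (2 - u)"
  have D_eq: "D = 1 - (1 - u)^2" unfolding D_def by (simp add: power2_eq_square algebra_simps)
  have "(1 - u)^2 < 1" using power_strict_mono[of "1 - u" 1 2] u(1,2) by simp
  then have D: "0 < D" "D < 1" using u(1,2) unfolding D_eq by simp_all
  have "0 < lambda_c eps" unfolding u(3) D_def[symmetric] using D(1) by simp
  then show lam0: "lam > 0" using assms(2) by simp
  have "sqrt (12 / D) < sqrt (lam^2)" using assms(2) lam0 unfolding u(3) D_def[symmetric] by simp
  then have "12 / D < lam^2" by (simp only: real_sqrt_less_iff)
  then have lam2: "12 < lam^2 * D" using D(1) by (simp add: divide_less_eq)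
  moreover have "lam^2 * D < lam^2" using D(2) lam0 by simp
  ultimately show lam12: "lam^2 > 12" by linarith
  define s where "s = sqrt (1 - 12/lam^2)"
  note S = sqrt_one_minus_12_div[OF lam12, folded s_def]
  have "lam^2 * (1 - u)^2 = lam^2 - lam^2 * D" unfolding D_eq by (simp add: algebra_simps)
  also have "\<dots> < lam^2 - 12" using lam2 by simp
  also have "\<dots> = lam^2 * s^2" using S(3) by (simp add: algebra_simps)
  finally have "(1 - u)^2 < s^2" using lam0 by simp
  then have "1 - s < u" using S(1) power_less_imp_less_base by fastforce
  then have "9 * eps^2 * (1 - s) < 2 * (1 + (1 - s))^2" using below[of "1 - s"] S(2) by simp
  then show "eps^2 < U lam (xi_max lam)"
    unfolding U_xi_max[OF lam12, folded s_def] using S(2)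
    by (simp add: pos_less_divide_eq algebra_simps)
qed

lemma U_less_sq_iff_less_lambda_max:
  fixes eps lam xi :: real
  assumes "xi > 2" and "eps > 1" and "lam > 0"
  shows "U lam xi < eps^2 \<longleftrightarrow> lam < lambda_max eps xi"
proof -
  define c where "c = 1 - 2/xi"
  have c: "0 < c" "c < 1" unfolding c_def using assms(1) by (auto simp: field_simps)
  have "U lam xi < eps^2 \<longleftrightarrow> 1 + lam^2/xi^2 < eps^2/c"
    unfolding U_def c_def[symmetric] using c by (simp add: less_divide_eq mult.commute)
  also have "\<dots> \<longleftrightarrow> (lam/xi)^2 < eps^2/c - 1" unfolding power_divide by linarith
  also have "\<dots> \<longleftrightarrow> sqrt ((lam/xi)^2) < sqrt (eps^2/c - 1)" by (simp only: real_sqrt_less_iff)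
  also have "\<dots> \<longleftrightarrow> lam/xi < sqrt (eps^2/c - 1)" using assms(1,3) by simp
  also have "\<dots> \<longleftrightarrow> lam < lambda_max eps xi"
    unfolding lambda_max_def c_def using assms(1) by (simp add: divide_less_eq mult.commute)
  finally show ?thesis .
qed

lemma xi_max_critical:
  fixes mu xi :: real
  assumes "3 < xi" and "xi \<le> 6" and "mu^2 = xi^2 / (xi - 3)"
  shows "xi_max mu = xi" "U mu xi = (1 - 2/xi) * (1 + 1/(xi - 3))"
proof -
  have "12/mu^2 = 12 * (xi - 3) / xi^2" using assms(1,3) by simp
  then have "1 - 12/mu^2 = ((6 - xi)/xi)^2"
    using assms(1) by (simp add: field_simps power2_eq_square)
  then have "sqrt (1 - 12/mu^2) = (6 - xi)/xi" using assms(1,2) by simp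
  then have "xi_max mu = mu^2/2 * (1 - (6 - xi)/xi)" unfolding xi_max_def by simp
  also have "\<dots> = xi" using assms(1,3) by (simp add: field_simps power2_eq_square)
  finally show "xi_max mu = xi" .
  show "U mu xi = (1 - 2/xi) * (1 + 1/(xi - 3))"
    unfolding U_def assms(3) using assms(1) by (simp add: field_simps power2_eq_square)
qed

lemma eps_min_less_iff:
  fixes eps xi :: real
  assumes "eps > 1" and "3 < xi"
  shows "eps_min xi < ereal eps \<longleftrightarrow> (1 - 2/xi) * (1 + 1/(xi - 3)) < eps^2"
proof (cases "xi < 4")
  case True
  then have "eps_min xi < ereal eps \<longleftrightarrow> sqrt ((1 - 2/xi) * (1 + 1/(xi - 3))) < sqrt (eps^2)"
    unfolding eps_min_def using assms by simp
  then show ?thesis by (simp only: real_sqrt_less_iff)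
next
  case False
  have "(1 - 2/xi) * (1 + 1/(xi - 3)) = (xi - 2)^2 / (xi * (xi - 3))"
    using False by (simp add: field_simps power2_eq_square)
  also have "\<dots> \<le> 1" using False by (simp add: divide_le_eq power2_eq_square algebra_simps)
  also have "1 < eps^2" using assms(1) by (simp add: one_less_power)
  finally show ?thesis unfolding eps_min_def using False assms by simp
qed

lemma case_II_imp:
  fixes eps lam xi :: real
  assumes "xi > 2" and "eps > 1" and "case_II eps lam xi"
  shows "eps_min xi < ereal eps" "lam < lambda_max eps xi"
proof -
  have lc: "lambda_c eps < lam" and xm: "xi_max lam < xi" and Ul: "U lam xi < eps^2"
    using assms(3) unfolding case_II_def by auto
  note L = lambda_c_less_imp[OF assms(2) lc]
  show "lam < lambda_max eps xi" using U_less_sq_iff_less_lambda_max[OF assms(1,2) L(1)] Ul by simp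
  have xi3: "3 < xi" using xi_max_bounds[OF L(2)] xm by simp
  show "eps_min xi < ereal eps"
  proof (cases "xi \<le> 6")
    case True
    have "xi^2 < lam^2 * (xi - 3)" using less_xi_max_iff[OF L(2)] xi3 True xm by simp
    then have "1/(xi - 3) < lam^2/xi^2"
      using xi3 by (simp add: divide_less_eq less_divide_eq mult.commute)
    moreover have "0 < 1 - 2/xi" using assms(1) by (simp add: field_simps)
    ultimately have "(1 - 2/xi) * (1 + 1/(xi - 3)) < U lam xi" unfolding U_def by simp
    with Ul show ?thesis using eps_min_less_iff[OF assms(2) xi3] by simp
  qed (use assms(2) in \<open>simp add: eps_min_def\<close>)
qed

lemma case_II_if:
  fixes eps lam xi :: real
  assumes "xi > 2" and "eps > 1" and em: "eps_min xi < ereal eps"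
    and lc: "lambda_c eps < lam" and lm: "lam < lambda_max eps xi"
  shows "case_II eps lam xi"
proof -
  note L = lambda_c_less_imp[OF assms(2) lc]
  have xi3: "3 < xi" using em by (auto simp: eps_min_def split: if_splits)
  have "xi_max lam < xi"
  proof (cases "xi \<le> 6")
    case True
    show ?thesis
    proof (rule ccontr)
      assume "\<not> xi_max lam < xi"
      then have "lam^2 \<le> xi^2 / (xi - 3)"
        using less_xi_max_iff[OF L(2)] xi3 True by (simp add: le_divide_eq)
      define mu where "mu = sqrt (xi^2 / (xi - 3))"
      have mu2: "mu^2 = xi^2 / (xi - 3)" unfolding mu_def using xi3 by simp
      have "lambda_c eps < mu"
        using lc real_le_rsqrt[OF \<open>lam^2 \<le> _\<close>] unfolding mu_def by simp
      then have "eps^2 < U mu (xi_max mu)" by (rule lambda_c_less_imp[OF assms(2)])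
      then show False
        using xi_max_critical[OF xi3 True mu2] eps_min_less_iff[OF assms(2) xi3] em by simp
    qed
  qed (use xi_max_bounds[OF L(2)] in simp)
  then show ?thesis
    unfolding case_II_def
    using assms(2) lc U_less_sq_iff_less_lambda_max[OF assms(1,2) L(1)] lm by simp
qed

lemma case_II_iff:
  fixes eps lam xi :: real
  assumes "xi > 2" and "eps > 1"
  shows "case_II eps lam xi \<longleftrightarrow>
    eps_min xi < ereal eps \<and> lambda_c eps < lam \<and> lam < lambda_max eps xi"
  using case_II_imp[OF assms] case_II_if[OF assms] unfolding case_II_def by blast

theorem lemma4:
  fixes xi :: real
  assumes "xi > 2"
  shows "{(eps, lam). eps > 1 \<and> case_II eps lam xi}
       = {(eps, lam). eps > 1 \<and> ereal eps > eps_min xi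
                       \<and> lambda_c eps < lam \<and> lam < lambda_max eps xi}"
  using case_II_iff[OF assms] by blast

end
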